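(* Let $\mathcal{D}$ be a domain with $\mathcal{SP}\subseteq\mathcal{D}\subseteq\mathcal{U}$ and let $\varphi$ be an own-peak-only rule on $\mathcal{E}_{\mathcal{D}}$ that satisfies the equal division guarantee and not obvious manipulability (NOM). Let $i\in N$ and $(R,\Omega)\in\mathcal{E}_{\mathcal{D}}$. If $p(R_i)$ is a singleton, then $\varphi_i(R,\Omega)$ lies in the closed interval between $p(R_i)$ and $\frac{\Omega}{n}$.
   Context: Let $N=\{1,\dots,n\}$ be a finite set of agents. $\mathcal{U}$ is the set of continuous complete preorders $R_i$ on $\mathbb{R}_+\cup\{\infty\}$ ($P_i$ strict, $I_i$ indifference), with peak $p(R_i)=\{x:xR_iy\ \forall y\}$ (identified with its element when a singleton). $R_i$ is single-peaked if $p(R_i)$ is a singleton and for $x,x'\in\mathbb{R}_+$, $xP_ix'$ whenever $x'<x\le p(R_i)$ or $p(R_i)\le x<x'$; $\mathcal{SP}$ is the set of these. For $\mathcal{D}\subseteq\mathcal{U}$, an economy is $(R,\Omega)$ with $R\in\mathcal{D}^n$, $\Omega>0$; $\mathcal{E}_{\mathcal{D}}$ is the set of economies; a rule is a map $\varphi:\mathcal{E}_{\mathcal{D}}\to\mathbb{R}^n_+$ with $\sum_j\varphi_j(R,\Omega)=\Omega$. Own-peak-only: for $R_i'\in\mathcal{D}$ with $p(R_i')=p(R_i)$, $\varphi_i(R,\Omega)=\varphi_i(R_i',R_{-i},\Omega)$. Equal division guarantee: $\Omega/n\in p(R_i)$ implies $\varphi_i(R,\Omega)I_i\Omega/n$.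 Option set $O^\varphi(R_i,\Omega)=\{\varphi_i(R_i,R_{-i},\Omega):R_{-i}\in\mathcal{D}^{n-1}\}$; $R_i'\in\mathcal{D}$ is a manipulation at $(R_i,\Omega)$ if $\varphi_i(R_i',R_{-i},\Omega)P_i\varphi_i(R_i,R_{-i},\Omega)$ for some $R_{-i}$, an obvious manipulation if moreover each $x'\in O^\varphi(R_i',\Omega)$ satisfies $x'P_ix$ for some $x\in O^\varphi(R_i,\Omega)$; NOM means no obvious manipulation exists. *)

theory Defs
  imports Complex_Main "HOL-Library.Extended_Nonnegative_Real" "HOL-Library.FuncSet"
begin

text \<open>Consumption space R_+ \<union> {\<infinity>} is modelled by ennreal. A preference is a binary relation:
  R x y means x is weakly preferred to y.\<close>
type_synonym pref = "ennreal \<Rightarrow> ennreal \<Rightarrow> bool"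

definition strict :: "pref \<Rightarrow> ennreal \<Rightarrow> ennreal \<Rightarrow> bool" where
  "strict R x y \<longleftrightarrow> R x y \<and> \<not> R y x"

definition indiff :: "pref \<Rightarrow> ennreal \<Rightarrow> ennreal \<Rightarrow> bool" where
  "indiff R x y \<longleftrightarrow> R x y \<and> R y x"

definition peak :: "pref \<Rightarrow> ennreal set" where
  "peak R = {x. \<forall>y. R x y}"

definition complete_preorder :: "pref \<Rightarrow> bool" where
  "complete_preorder R \<longleftrightarrow> (\<forall>x y. R x y \<or> R y x) \<and> (\<forall>x y z. R x y \<longrightarrow> R y z \<longrightarrow> R x z)"

definition continuous_pref :: "pref \<Rightarrow> bool" where
  "continuous_pref R \<longleftrightarrow> (\<forall>x. closed {y. R y x} \<and> closed {y. R x y})"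

definition U_dom :: "pref set" where
  "U_dom = {R. complete_preorder R \<and> continuous_pref R}"

definition SP_dom :: "pref set" where
  "SP_dom = {R \<in> U_dom. \<exists>p. peak R = {p} \<and>
     (\<forall>x x'::real. 0 \<le> x \<longrightarrow> 0 \<le> x' \<longrightarrow>
        ((x' < x \<and> ennreal x \<le> p) \<or> (p \<le> ennreal x \<and> x < x')) \<longrightarrow>
        strict R (ennreal x) (ennreal x'))}"

definition agents :: "nat \<Rightarrow> nat set" where
  "agents n = {1..n}"

definition economies :: "pref set \<Rightarrow> nat \<Rightarrow> ((nat \<Rightarrow> pref) \<times> real) set" where
  "economies D n = {(R, \<Omega>). R \<in> agents n \<rightarrow>\<^sub>E D \<and> \<Omega> > 0}"

type_synonym rule = "(nat \<Rightarrow> pref) \<Rightarrow> real \<Rightarrow> nat \<Rightarrow> real"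

definition is_rule :: "pref set \<Rightarrow> nat \<Rightarrow> rule \<Rightarrow> bool" where
  "is_rule D n \<phi> \<longleftrightarrow> (\<forall>(R, \<Omega>) \<in> economies D n.
     (\<forall>i \<in> agents n. 0 \<le> \<phi> R \<Omega> i) \<and> (\<Sum>j \<in> agents n. \<phi> R \<Omega> j) = \<Omega>)"

definition own_peak_only :: "pref set \<Rightarrow> nat \<Rightarrow> rule \<Rightarrow> bool" where
  "own_peak_only D n \<phi> \<longleftrightarrow> (\<forall>R \<Omega> i Ri'. (R, \<Omega>) \<in> economies D n \<longrightarrow> i \<in> agents n \<longrightarrow>
     Ri' \<in> D \<longrightarrow> peak Ri' = peak (R i) \<longrightarrow> \<phi> R \<Omega> i = \<phi> (R(i := Ri')) \<Omega> i)"

definition equal_division_guarantee :: "pref set \<Rightarrow> nat \<Rightarrow> rule \<Rightarrow> bool" where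
  "equal_division_guarantee D n \<phi> \<longleftrightarrow> (\<forall>R \<Omega> i. (R, \<Omega>) \<in> economies D n \<longrightarrow> i \<in> agents n \<longrightarrow>
     ennreal (\<Omega> / real n) \<in> peak (R i) \<longrightarrow>
     indiff (R i) (ennreal (\<phi> R \<Omega> i)) (ennreal (\<Omega> / real n)))"

definition option_set :: "pref set \<Rightarrow> nat \<Rightarrow> rule \<Rightarrow> nat \<Rightarrow> pref \<Rightarrow> real \<Rightarrow> real set" where
  "option_set D n \<phi> i Ri \<Omega> = {\<phi> R \<Omega> i | R. R \<in> agents n \<rightarrow>\<^sub>E D \<and> R i = Ri}"

definition manipulation :: "pref set \<Rightarrow> nat \<Rightarrow> rule \<Rightarrow> nat \<Rightarrow> pref \<Rightarrow> real \<Rightarrow> pref \<Rightarrow> bool" where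
  "manipulation D n \<phi> i Ri \<Omega> Ri' \<longleftrightarrow> Ri' \<in> D \<and>
     (\<exists>R. R \<in> agents n \<rightarrow>\<^sub>E D \<and> R i = Ri \<and>
        strict Ri (ennreal (\<phi> (R(i := Ri')) \<Omega> i)) (ennreal (\<phi> R \<Omega> i)))"

definition obvious_manipulation :: "pref set \<Rightarrow> nat \<Rightarrow> rule \<Rightarrow> nat \<Rightarrow> pref \<Rightarrow> real \<Rightarrow> pref \<Rightarrow> bool" where
  "obvious_manipulation D n \<phi> i Ri \<Omega> Ri' \<longleftrightarrow> manipulation D n \<phi> i Ri \<Omega> Ri' \<and>
     (\<forall>x' \<in> option_set D n \<phi> i Ri' \<Omega>. \<exists>x \<in> option_set D n \<phi> i Ri \<Omega>.
        strict Ri (ennreal x') (ennreal x))"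

definition NOM :: "pref set \<Rightarrow> nat \<Rightarrow> rule \<Rightarrow> bool" where
  "NOM D n \<phi> \<longleftrightarrow> (\<forall>i \<in> agents n. \<forall>Ri \<in> D. \<forall>\<Omega>>0. \<forall>Ri'.
     \<not> obvious_manipulation D n \<phi> i Ri \<Omega> Ri')"

end

theory Submission
  imports Defs "HOL-Analysis.Analysis"
begin

text \<open>Suppose \<open>x\<^sub>0 = \<phi>\<^sub>i(R, \<Omega>)\<close> lies outside the interval between the peak \<open>p\<close> and
  \<open>\<Omega>/n\<close>. Then there is a single-peaked \<open>R\<^sub>s\<close> with peak \<open>p\<close> (a tent with a steep enough
  slope on the side of \<open>x\<^sub>0\<close>, or "more is better" if \<open>p = \<infinity>\<close>) under which \<open>\<Omega>/n\<close> is
  strictly better than \<open>x\<^sub>0\<close>. By own-peak-only, \<open>\<phi>\<^sub>i(R\<^sub>s, R\<^sub>-\<^sub>i, \<Omega>) = x\<^sub>0\<close>. Reporting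
  any single-peaked preference with peak \<open>\<Omega>/n\<close> yields exactly \<open>\<Omega>/n\<close> against every
  profile, by the equal division guarantee. This is an obvious manipulation for \<open>R\<^sub>s\<close>,
  contradicting NOM.\<close>

definition pref_of_utility :: "(ennreal \<Rightarrow> 'a::linorder) \<Rightarrow> pref" where
  "pref_of_utility u x y \<longleftrightarrow> u y \<le> u x"

lemma strict_pref_of_utility [simp]: "strict (pref_of_utility u) x y \<longleftrightarrow> u y < u x"
  by (auto simp: strict_def pref_of_utility_def)

lemma peak_pref_of_utility: "peak (pref_of_utility u) = {x. \<forall>y. u y \<le> u x}"
  by (simp add: peak_def pref_of_utility_def)

lemma peak_pref_of_utility_eq_singleton:
  assumes "\<And>x. x \<noteq> p \<Longrightarrow> u x < u p"
  shows "peak (pref_of_utility u) = {p}"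
  unfolding peak_pref_of_utility
proof safe
  fix x
  assume "\<forall>y. u y \<le> u x"
  then show "x = p" using assms[of x] by (meson not_le)
next
  fix y
  show "u y \<le> u p" using assms[of y] by (cases "y = p") auto
qed

lemma pref_of_utility_in_U_dom:
  fixes u :: "ennreal \<Rightarrow> 'a::linorder_topology"
  assumes "continuous_on UNIV u"
  shows "pref_of_utility u \<in> U_dom"
  unfolding U_dom_def complete_preorder_def continuous_pref_def pref_of_utility_def
  using assms by (auto intro!: closed_Collect_le continuous_on_const)

lemma pref_of_utility_id_in_SP_dom:
  shows "pref_of_utility (id :: ennreal \<Rightarrow> ennreal) \<in> SP_dom"
    and "peak (pref_of_utility (id :: ennreal \<Rightarrow> ennreal)) = {top}"
proof -
  show peak: "peak (pref_of_utility (id :: ennreal \<Rightarrow> ennreal)) = {top}"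
    by (auto simp: peak_pref_of_utility intro: top_le)
  have "pref_of_utility (id :: ennreal \<Rightarrow> ennreal) \<in> U_dom"
    by (intro pref_of_utility_in_U_dom continuous_on_id')
  then show "pref_of_utility (id :: ennreal \<Rightarrow> ennreal) \<in> SP_dom"
    unfolding SP_dom_def using peak by (auto simp: ennreal_less_iff top_unique)
qed

definition tent :: "real \<Rightarrow> real \<Rightarrow> real \<Rightarrow> ennreal \<Rightarrow> ereal" where
  "tent a b q x = min (ereal a * (enn2ereal x - ereal q)) (ereal b * (ereal q - enn2ereal x))"

definition tent_real :: "real \<Rightarrow> real \<Rightarrow> real \<Rightarrow> real \<Rightarrow> real" where
  "tent_real a b q t = min (a * (t - q)) (b * (q - t))"

lemma tent_real_peak [simp]: "tent_real a b q q = 0"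
  by (simp add: tent_real_def)

lemma tent_ennreal: "0 \<le> t \<Longrightarrow> tent a b q (ennreal t) = ereal (tent_real a b q t)"
  by (simp add: tent_def tent_real_def)

lemma tent_top: "0 < b \<Longrightarrow> tent a b q top = -\<infinity>"
  by (simp add: tent_def)

lemma continuous_on_tent: "continuous_on UNIV (tent a b q)"
  unfolding continuous_on_def
proof
  fix x :: ennreal
  have x: "(enn2ereal \<longlongrightarrow> enn2ereal x) (at x)"
    using continuous_on_enn2ereal by (simp add: continuous_on_def)
  have "((\<lambda>y. enn2ereal y - ereal q) \<longlongrightarrow> enn2ereal x - ereal q) (at x)"
   and "((\<lambda>y. ereal q - enn2ereal y) \<longlongrightarrow> ereal q - enn2ereal x) (at x)"
    by (intro tendsto_diff_ereal_general x tendsto_const; simp)+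
  then show "(tent a b q \<longlongrightarrow> tent a b q x) (at x within UNIV)"
    unfolding tent_def by (intro tendsto_max tendsto_min tendsto_cmult_ereal) auto
qed

lemma tent_real_left:
  fixes a b q t :: real
  assumes "0 < a" "0 < b" "t \<le> q"
  shows "tent_real a b q t = a * (t - q)"
proof -
  have "a * (t - q) \<le> 0" "0 \<le> b * (q - t)"
    using assms by (simp_all add: mult_nonneg_nonpos)
  then show ?thesis by (simp add: tent_real_def)
qed

lemma tent_real_right:
  fixes a b q t :: real
  assumes "0 < a" "0 < b" "q \<le> t"
  shows "tent_real a b q t = b * (q - t)"
proof -
  have "0 \<le> a * (t - q)" "b * (q - t) \<le> 0"
    using assms by (simp_all add: mult_nonneg_nonpos)
  then show ?thesis by (simp add: tent_real_def)
qed

lemma tent_real_strict_mono: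
  fixes a b q t t' :: real
  assumes a: "0 < a" and b: "0 < b" and t: "(t' < t \<and> t \<le> q) \<or> (q \<le> t \<and> t < t')"
  shows "tent_real a b q t' < tent_real a b q t"
  using t
proof
  assume "t' < t \<and> t \<le> q"
  then show ?thesis
    using a tent_real_left[OF a b, of t q] tent_real_left[OF a b, of t' q] by simp
next
  assume "q \<le> t \<and> t < t'"
  then show ?thesis
    using b tent_real_right[OF a b, of q t] tent_real_right[OF a b, of q t'] by simp
qed

lemma tent_real_neg:
  fixes a b q t :: real
  assumes "0 < a" "0 < b" "t \<noteq> q"
  shows "tent_real a b q t < 0"
  using tent_real_strict_mono[OF assms(1,2), where t' = t and t = q and q = q] assms(3)
  by (cases "t < q") auto

lemma pref_of_utility_tent_in_SP_dom:
  assumes a: "0 < a" and b: "0 < b" and q: "0 \<le> q"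
  shows "pref_of_utility (tent a b q) \<in> SP_dom" and "peak (pref_of_utility (tent a b q)) = {ennreal q}"
proof -
  have "tent a b q x < tent a b q (ennreal q)" if "x \<noteq> ennreal q" for x
  proof (cases x rule: ennreal_cases)
    case (real t)
    then have "t \<noteq> q" using that by auto
    then have "tent_real a b q t < 0"
      by (rule tent_real_neg[OF a b])
    then show ?thesis
      using real q by (simp add: tent_ennreal)
  next
    case top
    then show ?thesis using b q by (simp add: tent_top tent_ennreal)
  qed
  then show peak: "peak (pref_of_utility (tent a b q)) = {ennreal q}"
    by (rule peak_pref_of_utility_eq_singleton)
  have "pref_of_utility (tent a b q) \<in> U_dom"
    by (intro pref_of_utility_in_U_dom continuous_on_tent)
  then show "pref_of_utility (tent a b q) \<in> SP_dom"
    unfolding SP_dom_def using peak q tent_real_strict_mono[OF a b]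
    by (auto simp: tent_ennreal)
qed

lemma tent_real_prefers_below:
  fixes q r x :: real
  assumes "x < q" "x < r"
  shows "\<exists>a>0. tent_real a 1 q x < tent_real a 1 q r"
proof -
  define a where "a = (\<bar>r - q\<bar> + 1) / (q - x)"
  have a: "0 < a" using assms by (simp add: a_def)
  have left: "tent_real a 1 q x = a * (x - q)"
    using assms by (intro tent_real_left[OF a zero_less_one]) simp
  have "a * (x - q) = - (\<bar>r - q\<bar> + 1)"
    using assms by (simp add: a_def divide_simps algebra_simps)
  moreover have "a * (x - q) < a * (r - q)" using a assms by simp
  ultimately have "tent_real a 1 q x < tent_real a 1 q r"
    using left by (auto simp: tent_real_def)
  with a show ?thesis by blast
qed

lemma tent_real_prefers_above:
  fixes q r x :: real
  assumes "q < x" "r < x"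
  shows "\<exists>b>0. tent_real 1 b q x < tent_real 1 b q r"
proof -
  define b where "b = (\<bar>r - q\<bar> + 1) / (x - q)"
  have b: "0 < b" using assms by (simp add: b_def)
  have right: "tent_real 1 b q x = b * (q - x)"
    using assms by (intro tent_real_right[OF zero_less_one b]) simp
  have "b * (q - x) = - (\<bar>r - q\<bar> + 1)"
    using assms by (simp add: b_def divide_simps algebra_simps)
  moreover have "b * (q - x) < b * (q - r)" using b assms by simp
  ultimately have "tent_real 1 b q x < tent_real 1 b q r"
    using right by (auto simp: tent_real_def)
  with b show ?thesis by blast
qed

lemma exists_SP_dom_prefers:
  assumes r: "0 \<le> r" and x: "0 \<le> x"
    and outside: "ennreal x < min p (ennreal r) \<or> max p (ennreal r) < ennreal x"
  shows "\<exists>Rs\<in>SP_dom. peak Rs = {p} \<and> strict Rs (ennreal r) (ennreal x)"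
proof (cases p rule: ennreal_cases)
  case top
  then have "x < r" using outside r x by (auto simp: ennreal_less_iff)
  then show ?thesis using pref_of_utility_id_in_SP_dom top x by (auto simp: ennreal_less_iff)
next
  case (real q)
  have strict_tent: "strict (pref_of_utility (tent a b q)) (ennreal r) (ennreal x)"
    if "tent_real a b q x < tent_real a b q r" for a b
    using that r x by (simp add: tent_ennreal)
  from outside real r x have "(x < q \<and> x < r) \<or> (q < x \<and> r < x)"
    by (auto simp: ennreal_less_iff)
  then show ?thesis
  proof
    assume "x < q \<and> x < r"
    then obtain a where "0 < a" "tent_real a 1 q x < tent_real a 1 q r"
      using tent_real_prefers_below by blast
    then show ?thesis
      using pref_of_utility_tent_in_SP_dom[of a 1 q] strict_tent real by auto
  next
    assume "q < x \<and> r < x"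
    then obtain b where "0 < b" "tent_real 1 b q x < tent_real 1 b q r"
      using tent_real_prefers_above by blast
    then show ?thesis
      using pref_of_utility_tent_in_SP_dom[of 1 b q] strict_tent real by auto
  qed
qed

lemma indiff_to_peak_in_peak:
  assumes "complete_preorder R" "y \<in> peak R" "indiff R x y"
  shows "x \<in> peak R"
  using assms unfolding complete_preorder_def peak_def indiff_def by blast

lemma option_set_subset_equal_share:
  assumes rule: "is_rule D n \<phi>" and edg: "equal_division_guarantee D n \<phi>" and "D \<subseteq> U_dom"
    and i: "i \<in> agents n" and \<Omega>: "0 < \<Omega>"
    and R': "R' \<in> D" "peak R' = {ennreal (\<Omega> / real n)}"
  shows "option_set D n \<phi> i R' \<Omega> \<subseteq> {\<Omega> / real n}"
proof
  fix y
  assume "y \<in> option_set D n \<phi> i R' \<Omega>"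
  then obtain Q where Q: "Q \<in> agents n \<rightarrow>\<^sub>E D" "Q i = R'" and y: "y = \<phi> Q \<Omega> i"
    by (auto simp: option_set_def)
  have economy: "(Q, \<Omega>) \<in> economies D n" using Q \<Omega> by (simp add: economies_def)
  then have "indiff R' (ennreal y) (ennreal (\<Omega> / real n))"
    using edg i Q R' y unfolding equal_division_guarantee_def by auto
  moreover have "complete_preorder R'" using R' \<open>D \<subseteq> U_dom\<close> by (auto simp: U_dom_def)
  ultimately have "ennreal y \<in> peak R'" using R' indiff_to_peak_in_peak by blast
  moreover have "0 \<le> y" using rule economy i y unfolding is_rule_def by fastforce
  ultimately show "y \<in> {\<Omega> / real n}" using R' \<Omega> by auto
qed

lemma obvious_manipulation_if_option_set_singleton:
  assumes "R' \<in> D" "i \<in> agents n" "Q \<in> agents n \<rightarrow>\<^sub>E D" "Q i = Ri"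
    and options: "option_set D n \<phi> i R' \<Omega> \<subseteq> {y}"
    and better: "strict Ri (ennreal y) (ennreal (\<phi> Q \<Omega> i))"
  shows "obvious_manipulation D n \<phi> i Ri \<Omega> R'"
proof -
  have "Q(i := R') \<in> agents n \<rightarrow>\<^sub>E D"
    using assms(1-3) PiE_fun_upd by (metis insert_absorb)
  then have "\<phi> (Q(i := R')) \<Omega> i \<in> option_set D n \<phi> i R' \<Omega>"
    unfolding option_set_def by force
  with options have "\<phi> (Q(i := R')) \<Omega> i = y" by blast
  then have "manipulation D n \<phi> i Ri \<Omega> R'"
    unfolding manipulation_def using assms by auto
  moreover have "\<phi> Q \<Omega> i \<in> option_set D n \<phi> i Ri \<Omega>"
    unfolding option_set_def using assms by auto
  ultimately show ?thesis
    unfolding obvious_manipulation_def using options better by blast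
qed

theorem lemma3:
  fixes D :: "pref set" and n :: nat and \<phi> :: rule
    and R :: "nat \<Rightarrow> pref" and \<Omega> :: real and i :: nat and p :: ennreal
  assumes "SP_dom \<subseteq> D" and "D \<subseteq> U_dom"
    and "is_rule D n \<phi>"
    and "own_peak_only D n \<phi>"
    and "equal_division_guarantee D n \<phi>"
    and "NOM D n \<phi>"
    and "i \<in> agents n"
    and "(R, \<Omega>) \<in> economies D n"
    and "peak (R i) = {p}"
  shows "min p (ennreal (\<Omega> / real n)) \<le> ennreal (\<phi> R \<Omega> i) \<and>
         ennreal (\<phi> R \<Omega> i) \<le> max p (ennreal (\<Omega> / real n))"
proof (rule ccontr)
  assume "\<not> ?thesis"
  then have outside: "ennreal (\<phi> R \<Omega> i) < min p (ennreal (\<Omega> / n)) \<or>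
      max p (ennreal (\<Omega> / n)) < ennreal (\<phi> R \<Omega> i)"
    by (simp only: de_Morgan_conj not_le)
  have R: "R \<in> agents n \<rightarrow>\<^sub>E D" and \<Omega>: "0 < \<Omega>" using assms(8) by (auto simp: economies_def)
  have "0 \<le> \<phi> R \<Omega> i" using assms(3,7,8) unfolding is_rule_def by fastforce
  moreover have share: "0 \<le> \<Omega> / n" using \<Omega> by simp
  ultimately obtain Rs where Rs: "Rs \<in> SP_dom" "peak Rs = {p}"
    and better: "strict Rs (ennreal (\<Omega> / n)) (ennreal (\<phi> R \<Omega> i))"
    using exists_SP_dom_prefers outside by blast
  have "Rs \<in> D" using Rs assms(1) by blast
  have same_outcome: "\<phi> R \<Omega> i = \<phi> (R(i := Rs)) \<Omega> i"
    using assms(4,7,8,9) Rs(2) \<open>Rs \<in> D\<close> unfolding own_peak_only_def by simp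
  have "R(i := Rs) \<in> agents n \<rightarrow>\<^sub>E D"
    using R \<open>Rs \<in> D\<close> assms(7) PiE_fun_upd by (metis insert_absorb)
  define R' where "R' = pref_of_utility (tent 1 1 (\<Omega> / n))"
  have R': "R' \<in> D" "peak R' = {ennreal (\<Omega> / n)}"
    using pref_of_utility_tent_in_SP_dom[OF zero_less_one zero_less_one share] assms(1)
    by (auto simp: R'_def)
  then have "option_set D n \<phi> i R' \<Omega> \<subseteq> {\<Omega> / n}"
    using option_set_subset_equal_share assms(2,3,5,7) \<Omega> by blast
  then have "obvious_manipulation D n \<phi> i Rs \<Omega> R'"
    using obvious_manipulation_if_option_set_singleton[OF R'(1) assms(7)]
      \<open>R(i := Rs) \<in> agents n \<rightarrow>\<^sub>E D\<close> better same_outcome by simp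
  then show False
    using assms(6,7) \<open>Rs \<in> D\<close> \<Omega> unfolding NOM_def by blast
qed

end
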